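(* Let $K\subseteq\Sigma^*$ be a bounded context-free language. Then there exists a bounded regular language $R\supseteq K$ such that $\{|w|:w\in K\}=\{|w|:w\in R\}$ and $\Psi(K)=\Psi(R)$.
   Context: A language is bounded if it is contained in $w_1^*\cdots w_k^*$ for some words $w_1,\dots,w_k$. For $a_1\cdots a_n\in\Sigma^*$, $\Psi(a_1\cdots a_n)=\{(a_1,n),(a_2,n-1),\dots,(a_n,1)\}$, and $\Psi(L)=\bigcup_{w\in L}\Psi(w)$. *)

theory Defs
  imports Main
begin

text \<open>A production rewrites a nonterminal (encoded as a natural number; any finite
  set of nonterminals can be renamed into nat) into a sentential form, i.e. a list
  of symbols, each either a nonterminal (Inl) or a terminal (Inr).\<close>

type_synonym 'a prod = "nat \<times> (nat + 'a) list"

inductive derives :: "'a prod set \<Rightarrow> (nat + 'a) list \<Rightarrow> (nat + 'a) list \<Rightarrow> bool"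
  for P where
  refl: "derives P u u"
| step: "derives P u (v @ Inl A # w) \<Longrightarrow> (A, \<alpha>) \<in> P \<Longrightarrow> derives P u (v @ \<alpha> @ w)"

definition cfg_lang :: "'a prod set \<Rightarrow> nat \<Rightarrow> 'a list set" where
  "cfg_lang P S = {w. derives P [Inl S] (map Inr w)}"

definition context_free :: "'a list set \<Rightarrow> bool" where
  "context_free L \<longleftrightarrow> (\<exists>P S. finite P \<and> L = cfg_lang P S)"

datatype 'a rexp = Zero | One | Atom 'a | Plus "'a rexp" "'a rexp"
  | Times "'a rexp" "'a rexp" | Star "'a rexp"

definition conc :: "'a list set \<Rightarrow> 'a list set \<Rightarrow> 'a list set" where
  "conc A B = {u @ v | u v. u \<in> A \<and> v \<in> B}"

inductive_set kleene_star :: "'a list set \<Rightarrow> 'a list set" for A where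
  nil: "[] \<in> kleene_star A"
| app: "u \<in> A \<Longrightarrow> v \<in> kleene_star A \<Longrightarrow> u @ v \<in> kleene_star A"

fun rlang :: "'a rexp \<Rightarrow> 'a list set" where
  "rlang Zero = {}"
| "rlang One = {[]}"
| "rlang (Atom a) = {[a]}"
| "rlang (Plus r s) = rlang r \<union> rlang s"
| "rlang (Times r s) = conc (rlang r) (rlang s)"
| "rlang (Star r) = kleene_star (rlang r)"

definition regular :: "'a list set \<Rightarrow> bool" where
  "regular L \<longleftrightarrow> (\<exists>r. L = rlang r)"

definition word_star :: "'a list \<Rightarrow> 'a list set" where
  "word_star w = {concat (replicate n w) | n. True}"

definition bounded_prod :: "'a list list \<Rightarrow> 'a list set" where
  "bounded_prod ws = foldr (\<lambda>w A. conc (word_star w) A) ws {[]}"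

definition bounded :: "'a list set \<Rightarrow> bool" where
  "bounded L \<longleftrightarrow> (\<exists>ws. L \<subseteq> bounded_prod ws)"

definition Psi :: "'a list \<Rightarrow> ('a \<times> nat) set" where
  "Psi w = {(w ! i, length w - i) | i. i < length w}"

definition Psi_lang :: "'a list set \<Rightarrow> ('a \<times> nat) set" where
  "Psi_lang L = (\<Union>w\<in>L. Psi w)"

end

theory Submission
  imports Defs
begin

(* The length set of a context-free language is ultimately periodic: pump a size-minimal
   parse tree at a repeated nonterminal close to the leaves. For a letter a, the positions j
   with (a, j) in Psi(K) are the lengths of the suffixes a v of words of K; these suffixes form
   again a context-free language, so the positions are ultimately periodic as well.

   Fix a common threshold t and period p, and write K inside w_1^* ... w_k^* with nonempty w_i.
   Let R consist of the words w_1^n_1 ... w_k^n_k whose exponent vector agrees with that of a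
   word of K up to the threshold t + p and modulo p beyond it. R is a finite union of products
   of sets {w^c} and w^c (w^p)^*, hence regular and bounded, and it contains K. A length, or a
   position of a letter, in a word of R differs from one in the corresponding word of K only by
   a multiple of p beyond the threshold t, so it already occurs for K. *)

section \<open>Parse trees\<close>

datatype 'a tree = Leaf 'a | Node nat "'a tree list"

fun root :: "'a tree \<Rightarrow> nat + 'a" where
  "root (Leaf a) = Inr a"
| "root (Node A ts) = Inl A"

fun yield :: "'a tree \<Rightarrow> 'a list" where
  "yield (Leaf a) = [a]"
| "yield (Node A ts) = concat (map yield ts)"

fun parse_tree :: "'a prod set \<Rightarrow> 'a tree \<Rightarrow> bool" where
  "parse_tree P (Leaf a) \<longleftrightarrow> True"
| "parse_tree P (Node A ts) \<longleftrightarrow> (A, map root ts) \<in> P \<and> (\<forall>t\<in>set ts. parse_tree P t)"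

definition tree_lang :: "'a prod set \<Rightarrow> nat \<Rightarrow> 'a list set" where
  "tree_lang P S = {yield t | t. parse_tree P t \<and> root t = Inl S}"

lemma mem_tree_lang: "w \<in> tree_lang P S \<longleftrightarrow> (\<exists>t. parse_tree P t \<and> root t = Inl S \<and> yield t = w)"
  by (auto simp: tree_lang_def)

lemma derives_trans:
  assumes "derives P u v" "derives P v w"
  shows "derives P u w"
  using assms(2,1) by induction (auto intro: derives.step)

lemma derives_context: "derives P u v \<Longrightarrow> derives P (x @ u @ y) (x @ v @ y)"
proof (induction rule: derives.induct)
  case (refl u)
  show ?case by (rule derives.refl)
next
  case (step u v A w \<alpha>)
  then have "derives P (x @ u @ y) ((x @ v) @ Inl A # (w @ y))" by simp
  from derives.step[OF this step(2)] show ?case by simp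
qed

lemma derives_forest:
  assumes "\<forall>t\<in>set ts. derives P [root t] (map Inr (yield t))"
  shows "derives P (map root ts) (map Inr (concat (map yield ts)))"
  using assms
proof (induction ts)
  case Nil
  show ?case by (simp add: derives.refl)
next
  case (Cons t ts)
  have "derives P ([root t] @ map root ts) (map Inr (yield t) @ map root ts)"
    using Cons.prems derives_context[of P _ _ "[]"] by fastforce
  moreover have "derives P (map Inr (yield t) @ map root ts @ [])
      (map Inr (yield t) @ map Inr (concat (map yield ts)) @ [])"
    using Cons by (intro derives_context) simp
  ultimately show ?case by (auto intro: derives_trans)
qed

lemma derives_of_parse_tree: "parse_tree P t \<Longrightarrow> derives P [root t] (map Inr (yield t))"
proof (induction t)
  case (Leaf a)
  show ?case by (simp add: derives.refl)
next
  case (Node A ts)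
  have "derives P [Inl A] (map root ts)"
    using Node.prems derives.step[of P "[Inl A]" "[]" A "[]"] derives.refl[of P "[Inl A]"] by simp
  moreover have "derives P (map root ts) (map Inr (concat (map yield ts)))"
    using Node by (intro derives_forest) auto
  ultimately show ?case by (auto intro: derives_trans)
qed

lemma parse_forest_of_derives:
  assumes "derives P u v" "map root ts = v" "\<forall>t\<in>set ts. parse_tree P t"
  shows "\<exists>ts'. map root ts' = u \<and> (\<forall>t\<in>set ts'. parse_tree P t) \<and>
    concat (map yield ts') = concat (map yield ts)"
  using assms
proof (induction arbitrary: ts rule: derives.induct)
  case (refl u)
  then show ?case by blast
next
  case (step u v A w \<alpha>)
  obtain ts1 ts23 where "ts = ts1 @ ts23" "map root ts1 = v" "map root ts23 = \<alpha> @ w"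
    using step.prems(1) map_eq_append_conv[of root ts v "\<alpha> @ w"] by metis
  moreover obtain ts2 ts3 where "ts23 = ts2 @ ts3" "map root ts2 = \<alpha>" "map root ts3 = w"
    using calculation(3) map_eq_append_conv[of root ts23 \<alpha> w] by metis
  ultimately have ts: "ts = ts1 @ ts2 @ ts3"
    "map root ts1 = v" "map root ts2 = \<alpha>" "map root ts3 = w" by simp_all
  have "map root (ts1 @ Node A ts2 # ts3) = v @ Inl A # w"
    "\<forall>t\<in>set (ts1 @ Node A ts2 # ts3). parse_tree P t"
    using ts step.hyps(2) step.prems(2) by auto
  from step.IH[OF this] show ?case
    by (simp add: ts)
qed

lemma cfg_lang_eq_tree_lang: "cfg_lang P S = tree_lang P S"
proof
  show "cfg_lang P S \<subseteq> tree_lang P S"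
  proof
    fix w assume "w \<in> cfg_lang P S"
    then have "derives P [Inl S] (map Inr w)" by (simp add: cfg_lang_def)
    moreover have "map root (map Leaf w) = map Inr w" "\<forall>t\<in>set (map Leaf w). parse_tree P t"
      by auto
    ultimately have "\<exists>ts. map root ts = [Inl S] \<and> (\<forall>t\<in>set ts. parse_tree P t) \<and>
        concat (map yield ts) = concat (map yield (map Leaf w))"
      by (rule parse_forest_of_derives)
    then obtain ts where ts: "map root ts = [Inl S]" "\<forall>t\<in>set ts. parse_tree P t"
        "concat (map yield ts) = concat (map yield (map Leaf w))"
      by (elim exE conjE)
    have leaves: "concat (map yield (map Leaf w)) = w" by (induction w) auto
    obtain t where "ts = [t]"
      using ts(1) by (auto simp: map_eq_Cons_conv)
    with ts leaves have "root t = Inl S" "parse_tree P t" "yield t = w" by auto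
    then show "w \<in> tree_lang P S" by (auto simp: tree_lang_def)
  qed
next
  show "tree_lang P S \<subseteq> cfg_lang P S"
    using derives_of_parse_tree by (fastforce simp: tree_lang_def cfg_lang_def)
qed

section \<open>Pumping\<close>

datatype 'a ctx = Hole | CNode nat "'a tree list" "'a ctx" "'a tree list"

fun plug :: "'a ctx \<Rightarrow> 'a tree \<Rightarrow> 'a tree" where
  "plug Hole t = t"
| "plug (CNode A l c r) t = Node A (l @ plug c t # r)"

fun ctx_length :: "'a ctx \<Rightarrow> nat" where
  "ctx_length Hole = 0"
| "ctx_length (CNode A l c r) =
    length (concat (map yield l)) + ctx_length c + length (concat (map yield r))"

fun height :: "'a tree \<Rightarrow> nat" where
  "height (Leaf a) = 0"
| "height (Node A ts) = Suc (Max (insert 0 (height ` set ts)))"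

lemma length_yield_plug: "length (yield (plug c t)) = ctx_length c + length (yield t)"
  by (induction c) auto

lemma root_plug: "root s = root t \<Longrightarrow> root (plug c s) = root (plug c t)"
  by (cases c) auto

lemma parse_tree_plugD: "parse_tree P (plug c t) \<Longrightarrow> parse_tree P t"
  by (induction c) auto

lemma parse_tree_plug_replace:
  "parse_tree P (plug c s) \<Longrightarrow> parse_tree P t \<Longrightarrow> root t = root s \<Longrightarrow> parse_tree P (plug c t)"
proof (induction c)
  case (CNode A l c r)
  then have "root (plug c t) = root (plug c s)" by (intro root_plug)
  with CNode show ?case by auto
qed simp

lemma size_plug_less: "size s < size t \<Longrightarrow> size (plug c s) < size (plug c t)"
  by (induction c) auto

lemma size_less_plug: "c \<noteq> Hole \<Longrightarrow> size t < size (plug c t)"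
proof (induction c)
  case (CNode A l c r)
  then show ?case by (cases "c = Hole") (auto simp: size_list_append)
qed simp

lemma height_Node_less: "t \<in> set ts \<Longrightarrow> height t < height (Node A ts)"
  by (simp add: le_imp_less_Suc)

lemma height_Node_le: "\<forall>t\<in>set ts. height t \<le> h \<Longrightarrow> height (Node A ts) \<le> Suc h"
  by simp

lemma height_plug: "height t \<le> height (plug c t)"
proof (induction c)
  case (CNode A l c r)
  then show ?case using height_Node_less[of "plug c t" "l @ plug c t # r" A] by simp
qed simp

lemma length_yield_le_power_height:
  assumes "\<forall>(A, \<alpha>)\<in>P. length \<alpha> \<le> m" "1 \<le> m"
  shows "parse_tree P t \<Longrightarrow> length (yield t) \<le> m ^ height t"
proof (induction t)
  case (Node A ts)
  define h where "h = Max (insert 0 (height ` set ts))"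
  have "length (yield t) \<le> m ^ h" if "t \<in> set ts" for t
  proof -
    have "length (yield t) \<le> m ^ height t" using Node that by auto
    also have "\<dots> \<le> m ^ h" using that assms(2) by (intro power_increasing) (auto simp: h_def)
    finally show ?thesis .
  qed
  then have "(\<Sum>t\<leftarrow>ts. length (yield t)) \<le> length ts * m ^ h"
    using sum_list_mono[of ts "\<lambda>t. length (yield t)" "\<lambda>_. m ^ h"] by (simp add: sum_list_triv)
  moreover have "length ts \<le> m" using Node.prems assms(1) by fastforce
  ultimately have "(\<Sum>t\<leftarrow>ts. length (yield t)) \<le> m * m ^ h"
    by (meson le_trans mult_le_mono1)
  then show ?case by (simp add: length_concat h_def comp_def)
qed simp

(* Pigeonhole along a path: W holds the nonterminals already met above t. *)
lemma repeated_nonterminal_or_label_in: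
  assumes "finite V" "fst ` P \<subseteq> V"
  shows "parse_tree P t \<Longrightarrow> W \<subseteq> V \<Longrightarrow> card (V - W) < height t \<Longrightarrow>
    (\<exists>C c s. t = plug C (plug c s) \<and> c \<noteq> Hole \<and> root (plug c s) = root s) \<or>
    (\<exists>C s B. t = plug C s \<and> root s = Inl B \<and> B \<in> W)"
proof (induction t arbitrary: W)
  case (Node A ts)
  show ?case
  proof (cases "A \<in> W")
    case True
    then show ?thesis by (intro disjI2 exI[of _ Hole]) auto
  next
    case False
    have "A \<in> V" using Node.prems(1) assms(2) by force
    with False have "V - W = insert A (V - insert A W)" by blast
    then have "card (V - W) = card (insert A (V - insert A W))" by (rule arg_cong)
    also have "\<dots> = Suc (card (V - insert A W))" using assms(1) by (intro card_insert_disjoint) auto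
    finally have card_step: "card (V - W) = Suc (card (V - insert A W))" .
    then obtain t where t: "t \<in> set ts" "card (V - insert A W) < height t"
      using Node.prems(3) height_Node_le[of ts "card (V - insert A W)" A]
      by (metis leD not_le_imp_less)
    obtain l r where ts: "ts = l @ t # r" using t(1) by (meson split_list)
    have "parse_tree P t" "insert A W \<subseteq> V" using Node.prems(1,2) t(1) \<open>A \<in> V\<close> by auto
    from Node.IH[OF t(1) this t(2)] show ?thesis
    proof (elim disjE exE conjE)
      fix C c s assume "t = plug C (plug c s)" "c \<noteq> Hole" "root (plug c s) = root s"
      then show ?thesis
        using ts by (intro disjI1 exI[of _ "CNode A l C r"] exI[of _ c] exI[of _ s]) auto
    next
      fix C s B assume Cs: "t = plug C s" "root s = Inl B" "B \<in> insert A W"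
      show ?thesis
      proof (cases "B = A")
        case True
        then show ?thesis
          using Cs ts by (intro disjI1 exI[of _ Hole] exI[of _ "CNode A l C r"]) auto
      next
        case False
        then show ?thesis using Cs ts by (intro disjI2 exI[of _ "CNode A l C r"]) auto
      qed
    qed
  qed
qed simp

lemma pumpable_subtree:
  assumes "finite P"
  shows "parse_tree P t \<Longrightarrow> card (fst ` P) < height t \<Longrightarrow>
    \<exists>C c s. t = plug C (plug c s) \<and> c \<noteq> Hole \<and> root (plug c s) = root s \<and>
      height (plug c s) \<le> Suc (card (fst ` P))"
proof (induction t)
  case (Node A ts)
  show ?case
  proof (cases "\<exists>t\<in>set ts. card (fst ` P) < height t")
    case True
    then obtain t l r where t: "t \<in> set ts" "card (fst ` P) < height t" "ts = l @ t # r"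
      by (meson split_list)
    have "parse_tree P t" using Node.prems(1) t(1) by auto
    with Node.IH[OF t(1)] t(2) obtain C c s where "t = plug C (plug c s)" "c \<noteq> Hole"
        "root (plug c s) = root s" "height (plug c s) \<le> Suc (card (fst ` P))"
      by blast
    then show ?thesis using t(3) by (intro exI[of _ "CNode A l C r"] exI[of _ c] exI[of _ s]) auto
  next
    case False
    then have "height (Node A ts) \<le> Suc (card (fst ` P))"
      by (intro height_Node_le) (simp add: not_less)
    moreover obtain C c s where "Node A ts = plug C (plug c s)" "c \<noteq> Hole"
        "root (plug c s) = root s"
      using repeated_nonterminal_or_label_in[of "fst ` P" P "Node A ts" "{}"] assms Node.prems
      by auto
    ultimately show ?thesis
      using height_plug[of "plug c s" C] by (intro exI[of _ C] exI[of _ c] exI[of _ s]) auto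
  qed
qed simp

lemma parse_tree_pump:
  assumes "parse_tree P (plug C (plug c s))" "root (plug c s) = root s"
  shows "parse_tree P (plug C ((plug c ^^ k) s)) \<and>
    root (plug C ((plug c ^^ k) s)) = root (plug C (plug c s))"
proof -
  have "parse_tree P ((plug c ^^ k) s) \<and> root ((plug c ^^ k) s) = root s"
  proof (induction k)
    case 0
    show ?case using assms(1) by (auto dest: parse_tree_plugD)
  next
    case (Suc k)
    have "parse_tree P (plug c s)" using assms(1) by (rule parse_tree_plugD)
    with Suc show ?case
      using parse_tree_plug_replace root_plug[of "(plug c ^^ k) s" s c] assms(2) by auto
  qed
  then show ?thesis
    using parse_tree_plug_replace[OF assms(1)] root_plug[of "(plug c ^^ k) s" "plug c s" C] assms(2)
    by simp
qed

lemma length_yield_pump: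
  "length (yield (plug C ((plug c ^^ k) s))) = ctx_length C + k * ctx_length c + length (yield s)"
  by (induction k) (auto simp: length_yield_plug)

lemma pumping_decomposition:
  assumes "finite P" "\<forall>(A, \<alpha>)\<in>P. length \<alpha> \<le> m" "1 \<le> m"
    and "parse_tree P t" "m ^ card (fst ` P) < length (yield t)"
    and minimal: "\<And>t'. parse_tree P t' \<Longrightarrow> root t' = root t \<Longrightarrow>
      length (yield t') = length (yield t) \<Longrightarrow> size t \<le> size t'"
  obtains C c s where "t = plug C (plug c s)" "root (plug c s) = root s"
    "1 \<le> ctx_length c" "ctx_length c \<le> m ^ Suc (card (fst ` P))"
proof -
  have "m ^ card (fst ` P) < m ^ height t"
    using assms(5) length_yield_le_power_height[OF assms(2,3,4)] by linarith
  then have "card (fst ` P) < height t"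
    using assms(3) power_increasing[of "height t" "card (fst ` P)" m] by linarith
  then obtain C c s where Ccs: "t = plug C (plug c s)" "c \<noteq> Hole" "root (plug c s) = root s"
      "height (plug c s) \<le> Suc (card (fst ` P))"
    using pumpable_subtree[OF assms(1,4)] by blast
  have "length (yield (plug c s)) \<le> m ^ height (plug c s)"
    using assms(4) Ccs(1)
    by (intro length_yield_le_power_height[OF assms(2,3)]) (auto dest: parse_tree_plugD)
  also have "\<dots> \<le> m ^ Suc (card (fst ` P))" using Ccs(4) assms(3) by (intro power_increasing)
  finally have "ctx_length c \<le> m ^ Suc (card (fst ` P))" by (simp add: length_yield_plug)
  moreover have "1 \<le> ctx_length c"
  proof (rule ccontr)
    assume "\<not> 1 \<le> ctx_length c"
    then have "length (yield (plug C s)) = length (yield t)"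
      using Ccs(1) length_yield_pump[of C 0 c s] length_yield_pump[of C 1 c s] by simp
    moreover have "parse_tree P (plug C s)" "root (plug C s) = root t"
      using assms(4) Ccs parse_tree_pump[of P C c s 0] by auto
    moreover have "size (plug C s) < size t"
      using Ccs(1,2) by (simp add: size_plug_less size_less_plug)
    ultimately show False using minimal by fastforce
  qed
  ultimately show ?thesis using that Ccs(1,3) by blast
qed

lemma length_tree_lang_pumping:
  assumes "finite P"
  obtains N D where "\<And>n. n \<in> length ` tree_lang P S \<Longrightarrow> N < n \<Longrightarrow>
    \<exists>d. 1 \<le> d \<and> d \<le> D \<and> (\<forall>k. n + k * d \<in> length ` tree_lang P S)"
proof -
  define m where "m = Max (insert 1 ((length \<circ> snd) ` P))"
  have m: "\<forall>(A, \<alpha>)\<in>P. length \<alpha> \<le> m" "1 \<le> m"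
    using assms by (auto simp: m_def intro!: Max_ge image_eqI)
  have "\<exists>d. 1 \<le> d \<and> d \<le> m ^ Suc (card (fst ` P)) \<and> (\<forall>k. n + k * d \<in> length ` tree_lang P S)"
    if n: "n \<in> length ` tree_lang P S" "m ^ card (fst ` P) < n" for n
  proof -
    let ?Q = "\<lambda>t. parse_tree P t \<and> root t = Inl S \<and> length (yield t) = n"
    obtain t where t: "?Q t" and t_min: "\<And>t'. ?Q t' \<Longrightarrow> size t \<le> size t'"
      using n(1) ex_has_least_nat[of ?Q _ size] unfolding tree_lang_def by blast
    have "parse_tree P t" "m ^ card (fst ` P) < length (yield t)" using t n(2) by auto
    moreover have "size t \<le> size t'" if "parse_tree P t'" "root t' = root t"
      "length (yield t') = length (yield t)" for t'
      using t t_min that by auto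
    ultimately obtain C c s where Ccs: "t = plug C (plug c s)" "root (plug c s) = root s"
        "1 \<le> ctx_length c" "ctx_length c \<le> m ^ Suc (card (fst ` P))"
      by (rule pumping_decomposition[OF assms m])
    have "n + k * ctx_length c \<in> length ` tree_lang P S" for k
    proof -
      have "length (yield (plug C ((plug c ^^ Suc k) s))) = n + k * ctx_length c"
        using t Ccs(1) length_yield_pump[of C "Suc k" c s] length_yield_pump[of C 1 c s] by simp
      moreover have "yield (plug C ((plug c ^^ Suc k) s)) \<in> tree_lang P S"
        using t Ccs parse_tree_pump[of P C c s "Suc k"] unfolding tree_lang_def by auto
      ultimately show ?thesis by (metis image_eqI)
    qed
    with Ccs(3,4) show ?thesis by blast
  qed
  then show ?thesis using that by blast
qed

section \<open>Ultimately periodic sets of naturals\<close>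

definition cong_beyond :: "nat \<Rightarrow> nat \<Rightarrow> nat \<Rightarrow> nat \<Rightarrow> bool" where
  "cong_beyond t p x y \<longleftrightarrow> x = y \<or> (t \<le> x \<and> t \<le> y \<and> x mod p = y mod p)"

definition periodic_from :: "nat \<Rightarrow> nat \<Rightarrow> nat set \<Rightarrow> bool" where
  "periodic_from t p X \<longleftrightarrow> (\<forall>x\<in>X. \<forall>y. cong_beyond t p x y \<longrightarrow> y \<in> X)"

definition ultimately_periodic :: "nat set \<Rightarrow> bool" where
  "ultimately_periodic X \<longleftrightarrow> (\<exists>t p. 0 < p \<and> periodic_from t p X)"

lemma cong_beyond_refl [simp]: "cong_beyond t p x x"
  by (simp add: cong_beyond_def)

lemma cong_beyond_sym: "cong_beyond t p x y \<Longrightarrow> cong_beyond t p y x"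
  by (auto simp: cong_beyond_def)

lemma cong_beyond_trans: "cong_beyond t p x y \<Longrightarrow> cong_beyond t p y z \<Longrightarrow> cong_beyond t p x z"
  by (auto simp: cong_beyond_def)

lemma list_all2_cong_beyond_trans:
  "list_all2 (cong_beyond t p) xs ys \<Longrightarrow> list_all2 (cong_beyond t p) ys zs \<Longrightarrow>
    list_all2 (cong_beyond t p) xs zs"
  by (rule list_all2_trans[OF cong_beyond_trans])

lemma cong_beyond_mono:
  "cong_beyond t' p' x y \<Longrightarrow> t \<le> t' \<Longrightarrow> p dvd p' \<Longrightarrow> cong_beyond t p x y"
  unfolding cong_beyond_def by (metis mod_mod_cancel order_trans)

lemma cong_beyond_add:
  "cong_beyond t p x y \<Longrightarrow> cong_beyond t p u v \<Longrightarrow> cong_beyond t p (x + u) (y + v)"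
  unfolding cong_beyond_def by (auto intro: mod_add_cong)

lemma cong_beyond_mult: "cong_beyond t p x y \<Longrightarrow> 0 < l \<Longrightarrow> cong_beyond t p (x * l) (y * l)"
  unfolding cong_beyond_def
proof (elim disjE conjE)
  assume "t \<le> x" "t \<le> y" "x mod p = y mod p" "0 < l"
  moreover have "x \<le> x * l" "y \<le> y * l" using \<open>0 < l\<close> by simp_all
  ultimately show "x * l = y * l \<or> t \<le> x * l \<and> t \<le> y * l \<and> x * l mod p = y * l mod p"
    by (auto intro: mod_mult_cong order_trans)
qed simp

lemma cong_beyond_representative: "0 < p \<Longrightarrow> \<exists>r < t + p. cong_beyond t p n r"
proof (cases "n < t + p")
  case False
  assume "0 < p"
  define r where "r = t + (n - t) mod p"
  have "r < t + p" "t \<le> r" using \<open>0 < p\<close> by (auto simp: r_def)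
  moreover have "r mod p = n mod p"
    using False by (simp add: r_def mod_add_right_eq)
  ultimately show ?thesis using False by (auto simp: cong_beyond_def)
qed (auto simp: cong_beyond_def)

lemma cong_beyond_below:
  assumes "cong_beyond (t + p) p n m" "c < n" "0 < p"
  shows "\<exists>c'<m. cong_beyond t p c c'"
proof (cases "c < m")
  case False
  with assms(1,2) have "t + p \<le> m" by (auto simp: cong_beyond_def)
  moreover obtain c' where "c' < t + p" "cong_beyond t p c c'"
    using cong_beyond_representative[OF assms(3)] by blast
  ultimately show ?thesis by (meson order_less_le_trans)
qed (auto simp: cong_beyond_def)

lemma cong_beyond_iff_progression:
  assumes "t \<le> c" "c < t + p"
  shows "cong_beyond t p n c \<longleftrightarrow> (\<exists>k. n = c + k * p)"
proof
  assume "cong_beyond t p n c"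
  then consider "n = c" | "t \<le> n" "n mod p = c mod p" by (auto simp: cong_beyond_def)
  then show "\<exists>k. n = c + k * p"
  proof cases
    case 2
    have "c \<le> n"
    proof (rule ccontr)
      assume "\<not> c \<le> n"
      then have "p dvd c - n" using 2(2) mod_eq_dvd_iff_nat[of n c p] by simp
      moreover have "0 < c - n" "c - n < p" using \<open>\<not> c \<le> n\<close> 2(1) assms(2) by linarith+
      ultimately show False using nat_dvd_not_less by blast
    qed
    then obtain k where "n - c = p * k"
      using 2(2) mod_eq_dvd_iff_nat[of c n p] by (auto elim: dvdE)
    with \<open>c \<le> n\<close> show ?thesis by (intro exI[of _ k]) (simp add: mult.commute)
  qed auto
next
  assume "\<exists>k. n = c + k * p"
  then show "cong_beyond t p n c" using assms(1) by (auto simp: cong_beyond_def)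
qed

lemma periodic_from_mono:
  "periodic_from t p X \<Longrightarrow> t \<le> t' \<Longrightarrow> p dvd p' \<Longrightarrow> periodic_from t' p' X"
  unfolding periodic_from_def using cong_beyond_mono by blast

lemma ultimately_periodic_common:
  assumes "finite \<X>" "\<forall>X\<in>\<X>. ultimately_periodic X"
  shows "\<exists>t p. 0 < p \<and> (\<forall>X\<in>\<X>. periodic_from t p X)"
  using assms
proof (induction rule: finite_induct)
  case empty
  show ?case by auto
next
  case (insert Y \<X>)
  then obtain t p t' p' where "0 < p" "\<forall>X\<in>\<X>. periodic_from t p X" "0 < p'" "periodic_from t' p' Y"
    unfolding ultimately_periodic_def by auto
  then have "0 < p * p'" "\<forall>X\<in>insert Y \<X>. periodic_from (max t t') (p * p') X"
    using periodic_from_mono by auto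
  then show ?case by blast
qed

lemma periodic_from_if_shift_closed:
  assumes "0 < p" and shift: "\<And>n k. n \<in> X \<Longrightarrow> N < n \<Longrightarrow> n + k * p \<in> X"
  shows "\<exists>t. periodic_from t p X"
proof -
  define G where "G = {r. \<exists>n\<in>X. N < n \<and> n mod p = r}"
  have "\<forall>r\<in>G. \<exists>n. n \<in> X \<and> N < n \<and> n mod p = r" unfolding G_def by blast
  then obtain f where f: "\<And>r. r \<in> G \<Longrightarrow> f r \<in> X \<and> N < f r \<and> f r mod p = r"
    using bchoice by metis
  define t where "t = Max (insert (Suc N) (f ` G))"
  have "finite G" using \<open>0 < p\<close> by (intro finite_subset[of G "{..<p}"]) (auto simp: G_def)
  then have t: "Suc N \<le> t" "\<And>r. r \<in> G \<Longrightarrow> f r \<le> t" by (auto simp: t_def)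
  have "periodic_from t p X"
    unfolding periodic_from_def
  proof (intro ballI allI impI)
    fix x y assume "x \<in> X" "cong_beyond t p x y"
    then consider "y = x" | "t \<le> x" "t \<le> y" "x mod p = y mod p"
      unfolding cong_beyond_def by auto
    then show "y \<in> X"
    proof cases
      case 2
      then have "N < x" using t(1) by linarith
      then have "x mod p \<in> G" using \<open>x \<in> X\<close> unfolding G_def by blast
      with f t(2) 2 have "f (x mod p) \<le> y" "y mod p = f (x mod p) mod p" "f (x mod p) \<in> X"
        "N < f (x mod p)"
        by (auto intro: order_trans)
      then obtain k where "y = f (x mod p) + k * p"
        by (metis le_add_diff_inverse mod_eq_dvd_iff_nat dvdE mult.commute)
      then show ?thesis using shift \<open>f (x mod p) \<in> X\<close> \<open>N < f (x mod p)\<close> by blast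
    qed (use \<open>x \<in> X\<close> in simp)
  qed
  then show ?thesis by blast
qed

lemma ultimately_periodic_if_pumping:
  assumes pump: "\<And>n. n \<in> X \<Longrightarrow> N < n \<Longrightarrow> \<exists>d. 1 \<le> d \<and> d \<le> D \<and> (\<forall>k. n + k * d \<in> X)"
  shows "ultimately_periodic X"
proof -
  have "n + k * fact D \<in> X" if n: "n \<in> X" "N < n" for n k
  proof -
    obtain d where d: "1 \<le> d" "d \<le> D" "\<forall>k. n + k * d \<in> X" using pump[OF n] by blast
    then obtain q where "fact D = d * q" by (metis dvd_fact dvdE)
    then show ?thesis using d(3) by (metis mult.assoc mult.commute)
  qed
  moreover have "(0 :: nat) < fact D" by simp
  ultimately show ?thesis
    unfolding ultimately_periodic_def using periodic_from_if_shift_closed by blast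
qed

lemma ultimately_periodic_length_tree_lang:
  "finite P \<Longrightarrow> ultimately_periodic (length ` tree_lang P S)"
  by (metis length_tree_lang_pumping ultimately_periodic_if_pumping)

lemma ultimately_periodic_length_context_free:
  "context_free K \<Longrightarrow> ultimately_periodic (length ` K)"
  unfolding context_free_def cfg_lang_eq_tree_lang
  using ultimately_periodic_length_tree_lang by blast

section \<open>Suffixes starting with a given letter\<close>

lemma map_preimage_exists:
  "\<forall>y\<in>set ys. \<exists>x. Q x \<and> y = f x \<Longrightarrow> \<exists>xs. (\<forall>x\<in>set xs. Q x) \<and> ys = map f xs"
proof (induction ys)
  case (Cons y ys)
  then obtain x xs where "Q x" "y = f x" "\<forall>x\<in>set xs. Q x" "ys = map f xs" by auto
  then show ?case by (intro exI[of _ "x # xs"]) auto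
qed simp

lemma concat_eq_append_Cons:
  "concat xss = u @ a # v \<Longrightarrow>
    \<exists>xss1 xs xs' xss2. xss = xss1 @ (xs @ a # xs') # xss2 \<and> u = concat xss1 @ xs \<and>
      v = xs' @ concat xss2"
proof (induction xss arbitrary: u)
  case (Cons ys xss)
  then obtain us where
    "(ys = u @ us \<and> us @ concat xss = a # v) \<or> (ys @ us = u \<and> concat xss = us @ a # v)"
    by (auto simp: append_eq_append_conv2)
  then show ?case
  proof (elim disjE conjE)
    assume "ys = u @ us" "us @ concat xss = a # v"
    then show ?thesis
    proof (cases us)
      case Nil
      with Cons.IH[of "[]"] \<open>us @ concat xss = a # v\<close> obtain xss1 xs xs' xss2 where
        "xss = xss1 @ (xs @ a # xs') # xss2" "[] = concat xss1 @ xs" "v = xs' @ concat xss2"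
        by auto
      with \<open>ys = u @ us\<close> Nil show ?thesis by (intro exI[of _ "ys # xss1"]) auto
    next
      case (Cons b us')
      with \<open>ys = u @ us\<close> \<open>us @ concat xss = a # v\<close> show ?thesis
        by (intro exI[of _ "[]"] exI[of _ u] exI[of _ us'] exI[of _ xss]) auto
    qed
  next
    assume "ys @ us = u" "concat xss = us @ a # v"
    with Cons.IH[of us] show ?thesis by (metis append.assoc concat.simps(2) append_Cons)
  qed
qed simp

definition productive :: "'a prod set \<Rightarrow> nat + 'a \<Rightarrow> bool" where
  "productive P X \<longleftrightarrow> (\<exists>t. parse_tree P t \<and> root t = X)"

definition unmarked :: "nat + 'a \<Rightarrow> nat + 'a" where
  "unmarked = map_sum (\<lambda>B. 2 * B) id"

definition marked :: "nat + 'a \<Rightarrow> nat + 'a" where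
  "marked = map_sum (\<lambda>B. 2 * B + 1) id"

lemma unmarked_simps [simp]: "unmarked (Inl B) = Inl (2 * B)" "unmarked (Inr b) = Inr b"
  by (simp_all add: unmarked_def)

lemma marked_simps [simp]: "marked (Inl B) = Inl (2 * B + 1)" "marked (Inr b) = Inr b"
  by (simp_all add: marked_def)

lemma inj_unmarked: "inj unmarked"
  unfolding unmarked_def by (intro sum.inj_map) (auto intro: injI)

(* Nonterminal 2 A is a copy of A, and 2 A + 1 derives the suffixes a # v of the words
   u @ a # v derived from A. Its productions follow the path from the root to the chosen
   occurrence of a and drop the symbols left of the path, which is sound only because these
   are required to be productive. *)

definition suffix_grammar :: "'a prod set \<Rightarrow> 'a \<Rightarrow> 'a prod set" where
  "suffix_grammar P a =
     {(2 * A, map unmarked \<alpha>) | A \<alpha>. (A, \<alpha>) \<in> P} \<union>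
     {(2 * A + 1, marked X # map unmarked \<gamma>) | A \<beta> X \<gamma>.
        (A, \<beta> @ X # \<gamma>) \<in> P \<and> X \<notin> Inr ` (- {a}) \<and> (\<forall>Y\<in>set \<beta>. productive P Y)}"

lemma finite_suffix_grammar:
  assumes "finite P"
  shows "finite (suffix_grammar P a)"
proof -
  let ?I = "SIGMA p:P. {..<length (snd p)}"
  have "suffix_grammar P a \<subseteq> (\<lambda>(A, \<alpha>). (2 * A, map unmarked \<alpha>)) ` P \<union>
      (\<lambda>((A, \<alpha>), k). (2 * A + 1, marked (\<alpha> ! k) # map unmarked (drop (Suc k) \<alpha>))) ` ?I"
  proof
    fix x assume "x \<in> suffix_grammar P a"
    then consider (copy) A \<alpha> where "x = (2 * A, map unmarked \<alpha>)" "(A, \<alpha>) \<in> P"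
      | (path) A \<beta> X \<gamma> where "x = (2 * A + 1, marked X # map unmarked \<gamma>)" "(A, \<beta> @ X # \<gamma>) \<in> P"
      unfolding suffix_grammar_def by blast
    then show "x \<in> (\<lambda>(A, \<alpha>). (2 * A, map unmarked \<alpha>)) ` P \<union>
      (\<lambda>((A, \<alpha>), k). (2 * A + 1, marked (\<alpha> ! k) # map unmarked (drop (Suc k) \<alpha>))) ` ?I"
    proof cases
      case path
      then have "x = (\<lambda>((A, \<alpha>), k). (2 * A + 1, marked (\<alpha> ! k) # map unmarked (drop (Suc k) \<alpha>)))
          ((A, \<beta> @ X # \<gamma>), length \<beta>)" "((A, \<beta> @ X # \<gamma>), length \<beta>) \<in> ?I"
        by auto
      then show ?thesis by blast
    qed force
  qed
  then show ?thesis by (rule finite_subset) (use assms in auto)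
qed

fun unmarked_tree :: "'a tree \<Rightarrow> 'a tree" where
  "unmarked_tree (Leaf b) = Leaf b"
| "unmarked_tree (Node A ts) = Node (2 * A) (map unmarked_tree ts)"

lemma root_unmarked_tree: "root (unmarked_tree t) = unmarked (root t)"
  by (cases t) auto

lemma yield_unmarked_tree: "yield (unmarked_tree t) = yield t"
  by (induction t) (auto cong: map_cong)

lemma parse_tree_unmarked_tree:
  "parse_tree P t \<Longrightarrow> parse_tree (suffix_grammar P a) (unmarked_tree t)"
proof (induction t)
  case (Node A ts)
  then have "(2 * A, map root (map unmarked_tree ts)) \<in> suffix_grammar P a"
    by (auto simp: suffix_grammar_def root_unmarked_tree)
  with Node show ?case by auto
qed simp

lemma unmarked_tree_preimage:
  "parse_tree (suffix_grammar P a) t \<Longrightarrow> root t \<in> range unmarked \<Longrightarrow>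
    \<exists>t0. parse_tree P t0 \<and> t = unmarked_tree t0"
proof (induction t)
  case (Leaf b)
  show ?case by (intro exI[of _ "Leaf b"]) simp
next
  case (Node n ts)
  then obtain X where "root (Node n ts) = unmarked X" by auto
  then obtain A where n: "n = 2 * A" by (cases X) auto
  with Node.prems(1) obtain \<alpha> where \<alpha>: "(A, \<alpha>) \<in> P" "map root ts = map unmarked \<alpha>"
    by (auto simp: suffix_grammar_def) presburger+
  have "\<forall>t\<in>set ts. \<exists>t0. parse_tree P t0 \<and> t = unmarked_tree t0"
  proof
    fix t assume "t \<in> set ts"
    moreover from this \<alpha>(2) have "root t \<in> unmarked ` set \<alpha>"
      by (metis imageI list.set_map)
    ultimately show "\<exists>t0. parse_tree P t0 \<and> t = unmarked_tree t0" using Node by auto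
  qed
  then obtain ts0 where ts0: "\<forall>t\<in>set ts0. parse_tree P t" "ts = map unmarked_tree ts0"
    using map_preimage_exists by blast
  then have "map unmarked (map root ts0) = map unmarked \<alpha>"
    using \<alpha>(2) by (simp add: root_unmarked_tree comp_def)
  then have "map root ts0 = \<alpha>" using inj_unmarked by (rule map_injective)
  with ts0 \<alpha>(1) n show ?case by (intro exI[of _ "Node A ts0"]) auto
qed

lemma unmarked_forest_preimage:
  assumes "\<forall>t\<in>set ts. parse_tree (suffix_grammar P a) t" "map root ts = map unmarked \<gamma>"
  shows "\<exists>ts0. (\<forall>t\<in>set ts0. parse_tree P t) \<and> map root ts0 = \<gamma> \<and> ts = map unmarked_tree ts0"
proof -
  have "\<forall>t\<in>set ts. \<exists>t0. parse_tree P t0 \<and> t = unmarked_tree t0"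
  proof
    fix t assume "t \<in> set ts"
    moreover from this assms(2) have "root t \<in> unmarked ` set \<gamma>"
      by (metis imageI list.set_map)
    ultimately show "\<exists>t0. parse_tree P t0 \<and> t = unmarked_tree t0"
      using assms(1) by (intro unmarked_tree_preimage) auto
  qed
  then obtain ts0 where ts0: "\<forall>t\<in>set ts0. parse_tree P t" "ts = map unmarked_tree ts0"
    using map_preimage_exists by blast
  then have "map unmarked (map root ts0) = map unmarked \<gamma>"
    using assms(2) by (simp add: root_unmarked_tree comp_def)
  then have "map root ts0 = \<gamma>" using inj_unmarked by (rule map_injective)
  with ts0 show ?thesis by blast
qed

lemma suffix_grammar_tree_of_tree:
  "parse_tree P t \<Longrightarrow> yield t = u @ a # v \<Longrightarrow>
    \<exists>t'. parse_tree (suffix_grammar P a) t' \<and> root t' = marked (root t) \<and> yield t' = a # v"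
proof (induction t arbitrary: u v)
  case (Leaf b)
  then show ?case by (intro exI[of _ "Leaf a"]) (auto simp: Cons_eq_append_conv)
next
  case (Node A ts)
  then obtain yss1 y1 y2 yss2 where
    "map yield ts = yss1 @ (y1 @ a # y2) # yss2" "v = y2 @ concat yss2"
    using concat_eq_append_Cons[of "map yield ts" u a v] by auto
  then obtain ts1 t ts2 where ts: "ts = ts1 @ t # ts2" "yield t = y1 @ a # y2"
      "v = y2 @ concat (map yield ts2)"
    by (auto simp: map_eq_append_conv)
  have "parse_tree P t" using Node.prems(1) ts(1) by simp
  with Node.IH ts obtain t' where t': "parse_tree (suffix_grammar P a) t'"
      "root t' = marked (root t)" "yield t' = a # y2"
    by force
  have "root t \<notin> Inr ` (- {a})"
    using ts(2) by (cases t) (auto simp: Cons_eq_append_conv)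
  moreover have "\<forall>Y\<in>set (map root ts1). productive P Y"
    using Node.prems(1) ts(1) by (auto simp: productive_def)
  moreover have "(A, map root ts1 @ root t # map root ts2) \<in> P"
    using Node.prems(1) ts(1) by simp
  ultimately have "(2 * A + 1, marked (root t) # map unmarked (map root ts2)) \<in> suffix_grammar P a"
    unfolding suffix_grammar_def by blast
  then have "parse_tree (suffix_grammar P a) (Node (2 * A + 1) (t' # map unmarked_tree ts2))"
    using t' Node.prems(1) ts(1)
    by (auto simp: root_unmarked_tree comp_def intro: parse_tree_unmarked_tree)
  moreover have "yield (Node (2 * A + 1) (t' # map unmarked_tree ts2)) = a # v"
    using t'(3) ts(3) by (simp add: yield_unmarked_tree comp_def)
  ultimately show ?case by (intro exI[of _ "Node (2 * A + 1) (t' # map unmarked_tree ts2)"]) auto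
qed

lemma tree_of_suffix_grammar_tree:
  "parse_tree (suffix_grammar P a) t \<Longrightarrow> root t = marked X \<Longrightarrow> X \<notin> Inr ` (- {a}) \<Longrightarrow>
    \<exists>t0 u v. parse_tree P t0 \<and> root t0 = X \<and> yield t = a # v \<and> yield t0 = u @ a # v"
proof (induction t arbitrary: X)
  case (Leaf b)
  then have "X = Inr a" "b = a" by (cases X; auto)+
  then show ?case by (intro exI[of _ "Leaf a"]) auto
next
  case (Node n ts)
  then obtain A where A: "X = Inl A" "n = 2 * A + 1" by (cases X) auto
  with Node.prems(1) obtain \<beta> Y \<gamma> where prod: "(A, \<beta> @ Y # \<gamma>) \<in> P" "Y \<notin> Inr ` (- {a})"
      "\<forall>Z\<in>set \<beta>. productive P Z" "map root ts = marked Y # map unmarked \<gamma>"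
    by (auto simp: suffix_grammar_def) presburger+
  then obtain t1 ts' where ts: "ts = t1 # ts'" "root t1 = marked Y" "map root ts' = map unmarked \<gamma>"
    by (auto simp: map_eq_Cons_conv)
  have "t1 \<in> set ts" "parse_tree (suffix_grammar P a) t1" using Node.prems(1) ts(1) by auto
  from Node.IH[OF this ts(2) prod(2)] obtain t10 u1 v1 where t10: "parse_tree P t10"
      "root t10 = Y" "yield t1 = a # v1" "yield t10 = u1 @ a # v1"
    by blast
  obtain ts0 where ts0: "\<forall>t\<in>set ts0. parse_tree P t" "map root ts0 = \<gamma>"
      "ts' = map unmarked_tree ts0"
    using unmarked_forest_preimage[of ts' P a \<gamma>] Node.prems(1) ts by auto
  have "\<forall>Z\<in>set \<beta>. \<exists>t. parse_tree P t \<and> Z = root t"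
    using prod(3) unfolding productive_def by metis
  then obtain pre where pre: "\<forall>t\<in>set pre. parse_tree P t" "\<beta> = map root pre"
    using map_preimage_exists by blast
  let ?t0 = "Node A (pre @ t10 # ts0)"
  have "parse_tree P ?t0" using prod(1) pre ts0 t10 by auto
  moreover have "yield ?t0 = (concat (map yield pre) @ u1) @ a # v1 @ concat (map yield ts0)"
    using t10(4) by simp
  moreover have "yield (Node n ts) = a # v1 @ concat (map yield ts0)"
    using ts t10(3) ts0(3) by (simp add: yield_unmarked_tree comp_def)
  ultimately show ?case using A by (intro exI[of _ ?t0]) auto
qed

lemma suffix_tree_lang:
  "{a # v | u v. u @ a # v \<in> tree_lang P S} = tree_lang (suffix_grammar P a) (2 * S + 1)"
proof
  show "{a # v | u v. u @ a # v \<in> tree_lang P S} \<subseteq> tree_lang (suffix_grammar P a) (2 * S + 1)"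
  proof
    fix w assume "w \<in> {a # v | u v. u @ a # v \<in> tree_lang P S}"
    then obtain u v where w: "w = a # v" "u @ a # v \<in> tree_lang P S" by blast
    then obtain t where t: "parse_tree P t" "root t = Inl S" "yield t = u @ a # v"
      unfolding mem_tree_lang by (elim exE conjE)
    with suffix_grammar_tree_of_tree[OF t(1,3)] w(1) obtain t' where
      "parse_tree (suffix_grammar P a) t'" "root t' = marked (Inl S)" "yield t' = w"
      by auto
    then show "w \<in> tree_lang (suffix_grammar P a) (2 * S + 1)"
      unfolding tree_lang_def by auto
  qed
next
  show "tree_lang (suffix_grammar P a) (2 * S + 1) \<subseteq> {a # v | u v. u @ a # v \<in> tree_lang P S}"
  proof
    fix w assume "w \<in> tree_lang (suffix_grammar P a) (2 * S + 1)"
    then obtain t where "parse_tree (suffix_grammar P a) t" "root t = marked (Inl S)" "yield t = w"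
      by (auto simp: tree_lang_def)
    from tree_of_suffix_grammar_tree[OF this(1,2)] this(3) obtain t0 u v where
      "parse_tree P t0" "root t0 = Inl S" "w = a # v" "yield t0 = u @ a # v"
      by auto
    then have "u @ a # v \<in> tree_lang P S" unfolding mem_tree_lang by blast
    with \<open>w = a # v\<close> show "w \<in> {a # v | u v. u @ a # v \<in> tree_lang P S}" by blast
  qed
qed

section \<open>Positions of letters\<close>

lemma Psi_memD: "(b, j) \<in> Psi w \<Longrightarrow> b \<in> set w"
  by (auto simp: Psi_def)

lemma Psi_lang_mono: "A \<subseteq> B \<Longrightarrow> Psi_lang A \<subseteq> Psi_lang B"
  unfolding Psi_lang_def by blast

lemma Psi_append: "Psi (u @ v) = (\<lambda>(b, j). (b, j + length v)) ` Psi u \<union> Psi v"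
proof (intro equalityI subsetI)
  fix x assume "x \<in> Psi (u @ v)"
  then obtain i where i: "i < length (u @ v)" "x = ((u @ v) ! i, length (u @ v) - i)"
    by (auto simp: Psi_def)
  show "x \<in> (\<lambda>(b, j). (b, j + length v)) ` Psi u \<union> Psi v"
  proof (cases "i < length u")
    case True
    then have "x = (\<lambda>(b, j). (b, j + length v)) (u ! i, length u - i)"
      using i by (auto simp: nth_append)
    with True show ?thesis unfolding Psi_def by blast
  next
    case False
    then have "x = (v ! (i - length u), length v - (i - length u))" "i - length u < length v"
      using i by (auto simp: nth_append)
    then show ?thesis unfolding Psi_def by blast
  qed
next
  fix x assume "x \<in> (\<lambda>(b, j). (b, j + length v)) ` Psi u \<union> Psi v"
  then consider i where "i < length u" "x = (u ! i, length u - i + length v)"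
    | i where "i < length v" "x = (v ! i, length v - i)"
    by (auto simp: Psi_def)
  then show "x \<in> Psi (u @ v)"
  proof cases
    case 1
    then have "x = ((u @ v) ! i, length (u @ v) - i)" "i < length (u @ v)"
      by (auto simp: nth_append)
    then show ?thesis unfolding Psi_def by blast
  next
    case 2
    then have "x = ((u @ v) ! (length u + i), length (u @ v) - (length u + i))"
        "length u + i < length (u @ v)"
      by (auto simp: nth_append)
    then show ?thesis unfolding Psi_def by blast
  qed
qed

lemma Psi_power:
  "Psi (concat (replicate n w)) = {(b, j + c * length w) | b j c. (b, j) \<in> Psi w \<and> c < n}"
proof (induction n)
  case 0
  show ?case by (simp add: Psi_def)
next
  case (Suc n)
  have "Psi (concat (replicate (Suc n) w)) =
      (\<lambda>(b, j). (b, j + n * length w)) ` Psi w \<union> Psi (concat (replicate n w))"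
    by (simp add: Psi_append length_concat sum_list_replicate)
  also have "\<dots> = {(b, j + c * length w) | b j c. (b, j) \<in> Psi w \<and> c < Suc n}"
    unfolding Suc.IH by (auto simp: less_Suc_eq)
  finally show ?case .
qed

lemma Psi_lang_positions:
  "{j. (a, j) \<in> Psi_lang K} = length ` {a # v | u v. u @ a # v \<in> K}"
proof (intro equalityI subsetI)
  fix j assume "j \<in> {j. (a, j) \<in> Psi_lang K}"
  then obtain w i where "w \<in> K" "i < length w" "w ! i = a" "j = length w - i"
    by (auto simp: Psi_lang_def Psi_def)
  then have "take i w @ a # drop (Suc i) w \<in> K" "j = length (a # drop (Suc i) w)"
    by (auto simp: id_take_nth_drop[symmetric])
  then show "j \<in> length ` {a # v | u v. u @ a # v \<in> K}" by blast
next
  fix j assume "j \<in> length ` {a # v | u v. u @ a # v \<in> K}"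
  then obtain u v where "u @ a # v \<in> K" "j = length (u @ a # v) - length u"
    by auto
  moreover have "(a, length (u @ a # v) - length u) \<in> Psi (u @ a # v)"
    unfolding Psi_def by (intro CollectI exI[of _ "length u"]) auto
  ultimately show "j \<in> {j. (a, j) \<in> Psi_lang K}" by (auto simp: Psi_lang_def)
qed

lemma ultimately_periodic_Psi_positions:
  assumes "context_free K"
  shows "ultimately_periodic {j. (a, j) \<in> Psi_lang K}"
proof -
  obtain P S where "finite P" "K = tree_lang P S"
    using assms by (auto simp: context_free_def cfg_lang_eq_tree_lang)
  then have "{j. (a, j) \<in> Psi_lang K} = length ` tree_lang (suffix_grammar P a) (2 * S + 1)"
    by (simp add: Psi_lang_positions suffix_tree_lang)
  with finite_suffix_grammar[OF \<open>finite P\<close>] show ?thesis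
    by (simp add: ultimately_periodic_length_tree_lang)
qed

section \<open>Bounded products\<close>

definition block_word :: "'a list list \<Rightarrow> nat list \<Rightarrow> 'a list" where
  "block_word ws ns = concat (map2 (\<lambda>w n. concat (replicate n w)) ws ns)"

lemma block_word_simps [simp]:
  "block_word [] ns = []"
  "block_word ws [] = []"
  "block_word (w # ws) (n # ns) = concat (replicate n w) @ block_word ws ns"
  by (simp_all add: block_word_def)

lemma bounded_prod_eq: "bounded_prod ws = {block_word ws ns | ns. length ns = length ws}"
proof (induction ws)
  case Nil
  show ?case by (simp add: bounded_prod_def)
next
  case (Cons w ws)
  have "bounded_prod (w # ws) = conc (word_star w) (bounded_prod ws)"
    by (simp add: bounded_prod_def)
  also have "\<dots> = {block_word (w # ws) ns | ns. length ns = length (w # ws)}"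
  proof (intro equalityI subsetI)
    fix x assume "x \<in> conc (word_star w) (bounded_prod ws)"
    then obtain n ns where "x = block_word (w # ws) (n # ns)" "length ns = length ws"
      unfolding Cons.IH conc_def word_star_def by auto
    then show "x \<in> {block_word (w # ws) ns | ns. length ns = length (w # ws)}"
      by (metis (mono_tags, lifting) length_Cons mem_Collect_eq)
  next
    fix x assume "x \<in> {block_word (w # ws) ns | ns. length ns = length (w # ws)}"
    then obtain n ns where "x = concat (replicate n w) @ block_word ws ns" "length ns = length ws"
      by (auto simp: length_Suc_conv)
    then show "x \<in> conc (word_star w) (bounded_prod ws)"
      unfolding Cons.IH conc_def word_star_def by blast
  qed
  finally show ?case .
qed

lemma bounded_prod_remove_Nil: "bounded_prod (filter (\<lambda>w. w \<noteq> []) ws) = bounded_prod ws"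
proof (induction ws)
  case (Cons w ws)
  have "conc (word_star []) A = A" for A :: "'a list set" by (auto simp: conc_def word_star_def)
  with Cons show ?case by (simp add: bounded_prod_def)
qed simp

lemma bounded_nonempty_wordsE:
  assumes "bounded K"
  obtains ws where "\<forall>w\<in>set ws. w \<noteq> []" "K \<subseteq> bounded_prod ws"
proof -
  obtain ws where "K \<subseteq> bounded_prod ws" using assms unfolding bounded_def by blast
  with bounded_prod_remove_Nil[of ws] show ?thesis
    using that[of "filter (\<lambda>w. w \<noteq> []) ws"] by auto
qed

lemma set_block_word: "set (block_word ws ns) \<subseteq> set (concat ws)"
  unfolding block_word_def by (auto dest!: set_zip_leftD)

lemma length_block_word_cong:
  "\<forall>w\<in>set ws. w \<noteq> [] \<Longrightarrow> list_all2 (cong_beyond t p) ns ms \<Longrightarrow>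
    cong_beyond t p (length (block_word ws ns)) (length (block_word ws ms))"
proof (induction ws arbitrary: ns ms)
  case Nil
  show ?case by (simp add: cong_beyond_def)
next
  case (Cons w ws)
  show ?case
  proof (cases ns)
    case Nil
    with Cons.prems show ?thesis by (simp add: cong_beyond_def)
  next
    case (Cons n ns')
    with Cons.prems(2) obtain m ms' where "ms = m # ms'" "cong_beyond t p n m"
        "list_all2 (cong_beyond t p) ns' ms'"
      by (auto simp: list_all2_Cons1)
    with Cons.IH[of ns' ms'] Cons.prems(1) \<open>ns = n # ns'\<close> show ?thesis
      by (auto simp: length_concat sum_list_replicate intro!: cong_beyond_add cong_beyond_mult)
  qed
qed

(* A position in the c-th copy of w, c < n, is matched by one in a copy c' < m; comparing
   exponents beyond t + p rather than t is what makes such a c' available. *)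
lemma Psi_block_word_cong:
  assumes "\<forall>w\<in>set ws. w \<noteq> []" "list_all2 (cong_beyond (t + p) p) ns ms" "0 < p"
    and "(b, j) \<in> Psi (block_word ws ns)"
  shows "\<exists>j'. (b, j') \<in> Psi (block_word ws ms) \<and> cong_beyond t p j j'"
  using assms
proof (induction ws arbitrary: ns ms j)
  case Nil
  then show ?case by (simp add: Psi_def)
next
  case (Cons w ws)
  obtain n ns' m ms' where nm: "ns = n # ns'" "ms = m # ms'" "cong_beyond (t + p) p n m"
      "list_all2 (cong_beyond (t + p) p) ns' ms'"
    using Cons.prems(2,4) by (cases ns) (auto simp: list_all2_Cons1 Psi_def)
  have cong_t: "list_all2 (cong_beyond t p) ns' ms'"
    using nm(4) by (rule list_all2_mono) (auto elim: cong_beyond_mono)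
  from Cons.prems(4) nm(1) consider
      j0 c where "(b, j0) \<in> Psi w" "c < n" "j = j0 + c * length w + length (block_word ws ns')"
    | "(b, j) \<in> Psi (block_word ws ns')"
    by (auto simp: Psi_append Psi_power)
  then show ?case
  proof cases
    case 1
    obtain c' where "c' < m" "cong_beyond t p c c'"
      using cong_beyond_below[OF nm(3) 1(2) Cons.prems(3)] by blast
    moreover have "cong_beyond t p (length (block_word ws ns')) (length (block_word ws ms'))"
      using Cons.prems(1) cong_t by (intro length_block_word_cong) auto
    ultimately have "cong_beyond t p j (j0 + c' * length w + length (block_word ws ms'))"
      using 1(3) Cons.prems(1) by (auto intro!: cong_beyond_add cong_beyond_mult)
    moreover have "(b, j0 + c' * length w) \<in> Psi (concat (replicate m w))"
      using 1(1) \<open>c' < m\<close> by (auto simp: Psi_power)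
    then have "(b, j0 + c' * length w + length (block_word ws ms')) \<in> Psi (block_word (w # ws) ms)"
      using nm(2) by (force simp: Psi_append)
    ultimately show ?thesis by blast
  next
    case 2
    with Cons.IH[of ns' ms' j] Cons.prems(1,3) nm show ?thesis
      by (auto simp: Psi_append)
  qed
qed

section \<open>Regular languages\<close>

lemma regular_empty: "regular {}"
  unfolding regular_def by (metis rlang.simps(1))

lemma regular_union: "regular A \<Longrightarrow> regular B \<Longrightarrow> regular (A \<union> B)"
  unfolding regular_def by (metis rlang.simps(4))

lemma regular_conc: "regular A \<Longrightarrow> regular B \<Longrightarrow> regular (conc A B)"
  unfolding regular_def by (metis rlang.simps(5))

lemma regular_Union: "finite \<A> \<Longrightarrow> \<forall>A\<in>\<A>. regular A \<Longrightarrow> regular (\<Union>\<A>)"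
  by (induction rule: finite_induct) (auto intro: regular_empty regular_union)

lemma regular_singleton: "regular {u}"
proof (induction u)
  case Nil
  show ?case unfolding regular_def by (metis rlang.simps(2))
next
  case (Cons a u)
  have "{a # u} = conc {[a]} {u}" by (simp add: conc_def)
  moreover have "regular {[a]}" unfolding regular_def by (metis rlang.simps(3))
  ultimately show ?case using Cons by (simp add: regular_conc)
qed

lemma regular_word_star: "regular (word_star u)"
proof -
  obtain r where "rlang r = {u}" using regular_singleton unfolding regular_def by metis
  moreover have "kleene_star {u} = word_star u"
  proof (intro equalityI subsetI)
    fix x assume "x \<in> kleene_star {u}"
    then show "x \<in> word_star u"
      by induction (auto simp: word_star_def intro: exI[of _ 0] exI[of _ "Suc _"])
  next
    fix x assume "x \<in> word_star u"
    then obtain n where "x = concat (replicate n u)" by (auto simp: word_star_def)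
    then show "x \<in> kleene_star {u}" by (induction n arbitrary: x) (auto intro: kleene_star.intros)
  qed
  ultimately have "rlang (Star r) = word_star u" by simp
  then show ?thesis unfolding regular_def by metis
qed

definition power_class :: "nat \<Rightarrow> nat \<Rightarrow> 'a list \<Rightarrow> nat \<Rightarrow> 'a list set" where
  "power_class t p w c = {concat (replicate n w) | n. cong_beyond t p n c}"

lemma concat_replicate_mult:
  "concat (replicate (k * p) w) = concat (replicate k (concat (replicate p w)))"
  by (induction k) (auto simp: replicate_add)

lemma regular_power_class: "c < t + p \<Longrightarrow> regular (power_class t p w c)"
proof (cases "c < t")
  case True
  then have "power_class t p w c = {concat (replicate c w)}"
    by (auto simp: power_class_def cong_beyond_def)
  then show ?thesis by (simp add: regular_singleton)
next
  case False
  assume "c < t + p"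
  with False have "power_class t p w c = {concat (replicate (c + k * p) w) | k. True}"
    by (auto simp: power_class_def cong_beyond_iff_progression)
  also have "\<dots> = conc {concat (replicate c w)} (word_star (concat (replicate p w)))"
    by (auto simp: conc_def word_star_def replicate_add concat_replicate_mult)
  finally show ?thesis by (simp add: regular_conc regular_singleton regular_word_star)
qed

definition block_class :: "nat \<Rightarrow> nat \<Rightarrow> 'a list list \<Rightarrow> nat list \<Rightarrow> 'a list set" where
  "block_class t p ws cs = {block_word ws ns | ns. list_all2 (cong_beyond t p) ns cs}"

lemma regular_block_class:
  "length ws = length cs \<Longrightarrow> \<forall>c\<in>set cs. c < t + p \<Longrightarrow> regular (block_class t p ws cs)"
proof (induction ws cs rule: list_induct2)
  case Nil
  have "block_class t p ([] :: 'a list list) [] = {[]}" by (auto simp: block_class_def)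
  then show ?case by (simp add: regular_singleton)
next
  case (Cons w ws c cs)
  have "block_class t p (w # ws) (c # cs) = conc (power_class t p w c) (block_class t p ws cs)"
  proof (intro equalityI subsetI)
    fix x assume "x \<in> block_class t p (w # ws) (c # cs)"
    then obtain n ns where "x = concat (replicate n w) @ block_word ws ns" "cong_beyond t p n c"
        "list_all2 (cong_beyond t p) ns cs"
      by (auto simp: block_class_def list_all2_Cons2)
    then show "x \<in> conc (power_class t p w c) (block_class t p ws cs)"
      unfolding conc_def power_class_def block_class_def by blast
  next
    fix x assume "x \<in> conc (power_class t p w c) (block_class t p ws cs)"
    then obtain n ns where "x = block_word (w # ws) (n # ns)" "cong_beyond t p n c"
        "list_all2 (cong_beyond t p) ns cs"
      by (auto simp: conc_def power_class_def block_class_def)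
    then show "x \<in> block_class t p (w # ws) (c # cs)"
      unfolding block_class_def by blast
  qed
  with Cons show ?case by (simp add: regular_conc regular_power_class)
qed

section \<open>The envelope\<close>

definition envelope :: "nat \<Rightarrow> nat \<Rightarrow> 'a list list \<Rightarrow> 'a list set \<Rightarrow> 'a list set" where
  "envelope t p ws K = {block_word ws ns | ns ms. length ns = length ws \<and>
     block_word ws ms \<in> K \<and> list_all2 (cong_beyond t p) ns ms}"

lemma subset_envelope: "K \<subseteq> bounded_prod ws \<Longrightarrow> K \<subseteq> envelope t p ws K"
  unfolding envelope_def bounded_prod_eq
  by (fastforce intro: list_all2_refl simp: cong_beyond_def)

lemma envelope_subset_bounded_prod: "envelope t p ws K \<subseteq> bounded_prod ws"
  unfolding envelope_def bounded_prod_eq by blast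

lemma envelope_eq_Union_block_class:
  assumes "0 < p"
  shows "envelope t p ws K = (\<Union>cs \<in> {cs. length cs = length ws \<and> (\<forall>c\<in>set cs. c < t + p) \<and>
    (\<exists>ms. block_word ws ms \<in> K \<and> list_all2 (cong_beyond t p) cs ms)}. block_class t p ws cs)"
    (is "_ = (\<Union>cs\<in>?C. _)")
proof (intro equalityI subsetI)
  have "\<forall>n. \<exists>r. r < t + p \<and> cong_beyond t p n r"
    using cong_beyond_representative[OF assms] by blast
  then obtain f where f: "\<And>n. f n < t + p" "\<And>n. cong_beyond t p n (f n)"
    by (metis choice)
  fix x assume "x \<in> envelope t p ws K"
  then obtain ns ms where x: "x = block_word ws ns" "length ns = length ws"
      "block_word ws ms \<in> K" "list_all2 (cong_beyond t p) ns ms"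
    unfolding envelope_def by blast
  have to_f: "list_all2 (cong_beyond t p) ns (map f ns)"
    and from_f: "list_all2 (cong_beyond t p) (map f ns) ns"
    using f(2) cong_beyond_sym by (simp_all add: list_all2_conv_all_nth)
  have "map f ns \<in> ?C"
    using x(2,3) f(1) list_all2_cong_beyond_trans[OF from_f x(4)] by auto
  moreover have "x \<in> block_class t p ws (map f ns)"
    using x(1) to_f unfolding block_class_def by blast
  ultimately show "x \<in> (\<Union>cs\<in>?C. block_class t p ws cs)" by blast
next
  fix x assume "x \<in> (\<Union>cs\<in>?C. block_class t p ws cs)"
  then obtain cs ns ms where "length cs = length ws" "x = block_word ws ns"
      "list_all2 (cong_beyond t p) ns cs" "list_all2 (cong_beyond t p) cs ms"
      "block_word ws ms \<in> K"
    unfolding block_class_def by blast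
  moreover from this have "length ns = length ws" by (metis list_all2_lengthD)
  ultimately show "x \<in> envelope t p ws K"
    unfolding envelope_def using list_all2_cong_beyond_trans by blast
qed

lemma regular_envelope:
  assumes "0 < p"
  shows "regular (envelope t p ws K)"
proof -
  let ?C = "{cs. length cs = length ws \<and> (\<forall>c\<in>set cs. c < t + p) \<and>
    (\<exists>ms. block_word ws ms \<in> K \<and> list_all2 (cong_beyond t p) cs ms)}"
  have "finite ?C"
    by (rule finite_subset[of _ "{cs. set cs \<subseteq> {..<t + p} \<and> length cs = length ws}"])
      (auto simp: finite_lists_length_eq)
  moreover have "regular (block_class t p ws cs)" if "cs \<in> ?C" for cs
    using that by (intro regular_block_class) auto
  ultimately show ?thesis
    unfolding envelope_eq_Union_block_class[OF assms] by (auto intro: regular_Union)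
qed

lemma length_envelope:
  assumes "\<forall>w\<in>set ws. w \<noteq> []" "periodic_from t p (length ` K)"
  shows "length ` envelope t p ws K \<subseteq> length ` K"
proof
  fix l assume "l \<in> length ` envelope t p ws K"
  then obtain ns ms where "l = length (block_word ws ns)" "block_word ws ms \<in> K"
      "list_all2 (cong_beyond t p) ns ms"
    by (auto simp: envelope_def)
  with assms show "l \<in> length ` K"
    unfolding periodic_from_def by (metis cong_beyond_sym image_eqI length_block_word_cong)
qed

lemma Psi_lang_envelope:
  assumes "\<forall>w\<in>set ws. w \<noteq> []" "0 < p"
    and "\<forall>a\<in>set (concat ws). periodic_from t p {j. (a, j) \<in> Psi_lang K}"
  shows "Psi_lang (envelope (t + p) p ws K) \<subseteq> Psi_lang K"
proof (intro subrelI)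
  fix b j assume "(b, j) \<in> Psi_lang (envelope (t + p) p ws K)"
  then obtain ns ms where "(b, j) \<in> Psi (block_word ws ns)" "block_word ws ms \<in> K"
      "list_all2 (cong_beyond (t + p) p) ns ms"
    unfolding Psi_lang_def envelope_def by blast
  moreover from this obtain j' where "(b, j') \<in> Psi (block_word ws ms)" "cong_beyond t p j' j"
    using Psi_block_word_cong[OF assms(1) _ assms(2)] cong_beyond_sym by blast
  moreover from this(1) have "b \<in> set (concat ws)"
    by (meson Psi_memD set_block_word subsetD)
  ultimately show "(b, j) \<in> Psi_lang K"
    using assms(3) unfolding periodic_from_def Psi_lang_def by blast
qed

theorem lemma12:
  fixes K :: "'a list set"
  assumes "context_free K" and "bounded K"
  shows "\<exists>R. regular R \<and> bounded R \<and> K \<subseteq> R \<and>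
           length ` K = length ` R \<and> Psi_lang K = Psi_lang R"
proof -
  obtain ws where ws: "\<forall>w\<in>set ws. w \<noteq> []" "K \<subseteq> bounded_prod ws"
    using assms(2) by (rule bounded_nonempty_wordsE)
  let ?positions = "\<lambda>a. {j. (a, j) \<in> Psi_lang K}"
  obtain t p where "0 < p"
      "\<forall>X\<in>insert (length ` K) (?positions ` set (concat ws)). periodic_from t p X"
    using ultimately_periodic_common[of "insert (length ` K) (?positions ` set (concat ws))"]
      ultimately_periodic_length_context_free[OF assms(1)]
      ultimately_periodic_Psi_positions[OF assms(1)]
    by blast
  then have periodic: "periodic_from (t + p) p (length ` K)"
      "\<forall>a\<in>set (concat ws). periodic_from t p (?positions a)"
    using periodic_from_mono[of t p "length ` K" "t + p" p] by auto
  let ?R = "envelope (t + p) p ws K"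
  have "K \<subseteq> ?R" using ws(2) by (rule subset_envelope)
  moreover have "length ` ?R \<subseteq> length ` K" using ws(1) periodic(1) by (rule length_envelope)
  moreover have "Psi_lang ?R \<subseteq> Psi_lang K"
    using ws(1) \<open>0 < p\<close> periodic(2) by (rule Psi_lang_envelope)
  moreover have "regular ?R" using \<open>0 < p\<close> by (rule regular_envelope)
  moreover have "bounded ?R" unfolding bounded_def using envelope_subset_bounded_prod by blast
  ultimately show ?thesis by (meson equalityI image_mono Psi_lang_mono)
qed

end
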